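(* Let $f\in\Gamma_0(X)$ and let $x\in X$ be a minimizer of $f$. Then for every $M\ge 0$, \[ \partial f(x)=\bigcap_{\varepsilon>0}\overline{\operatorname{co}}\big(\partial_\varepsilon f(x)\cup \varepsilon\,\partial_{\varepsilon+M}f(x)\big)=\bigcap_{\varepsilon>0}\overline{\operatorname{co}}\big(\partial_\varepsilon f(x)\cup \varepsilon\,\partial_{\varepsilon+M}f^+(x)\big), \] where $f^+:=\max\{f,0\}$.
   Context: $X$ is a real separated (Hausdorff) locally convex space, with topological dual $X^*$ endowed with the weak$^*$ topology; closures and closed convex hulls $\overline{\operatorname{co}}$ in $X^*$ are taken in the weak$^*$ topology. $\Gamma_0(X)$ denotes the set of proper, convex, lower semicontinuous functions $X\to\mathbb{R}\cup\{+\infty\}$. For $g:X\to\overline{\mathbb{R}}$, $x\in X$ and $\varepsilon\in\mathbb{R}$, the $\varepsilon$-subdifferential is $\partial_\varepsilon g(x)=\{x^*\in X^*:\ g(y)\ge g(x)+\langle x^*,y-x\rangle-\varepsilon\ \forall y\in X\}$ if $g(x)\in\mathbb{R}$ and $\varepsilon\ge0$, and $\partial_\varepsilon g(x)=\emptyset$ otherwise; $\partial g(x):=\partial_0 g(x)$. For $\lambda\in\mathbb{R}$ and a set $A$, $\lambda A=\{\lambda a: a\in A\}$. *)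

theory Defs
  imports "HOL-Analysis.Analysis"
begin

definition locally_convex_space :: "'a::{real_vector,t2_space} itself \<Rightarrow> bool" where
  "locally_convex_space _ \<longleftrightarrow>
     continuous_on UNIV (\<lambda>p::'a \<times> 'a. fst p + snd p) \<and>
     continuous_on UNIV (\<lambda>p::real \<times> 'a. fst p *\<^sub>R snd p) \<and>
     (\<forall>U::'a set. open U \<and> 0 \<in> U \<longrightarrow> (\<exists>V. open V \<and> convex V \<and> 0 \<in> V \<and> V \<subseteq> U))"

text \<open>X* is viewed inside the function
  space 'a => real, whose (product) topology is the topology of pointwise convergence;
  its trace on X* is exactly the weak* topology.\<close>
definition dual_space :: "('a::{real_vector,topological_space} \<Rightarrow> real) set" where
  "dual_space = {l. linear l \<and> continuous_on UNIV l}"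

definition fconv_hull :: "('a \<Rightarrow> real) set \<Rightarrow> ('a \<Rightarrow> real) set" where
  "fconv_hull A = {(\<lambda>y. \<Sum>i\<in>I. c i * g i y) | (I :: nat set) c g.
       finite I \<and> I \<noteq> {} \<and> (\<forall>i\<in>I. 0 \<le> c i \<and> g i \<in> A) \<and> sum c I = 1}"

definition wstar_closed_conv_hull :: "('a::{real_vector,topological_space} \<Rightarrow> real) set \<Rightarrow> ('a \<Rightarrow> real) set" where
  "wstar_closed_conv_hull A = dual_space \<inter> closure (fconv_hull A)"

definition fscale :: "real \<Rightarrow> ('a \<Rightarrow> real) set \<Rightarrow> ('a \<Rightarrow> real) set" where
  "fscale t A = (\<lambda>l y. t * l y) ` A"

definition proper_fun :: "('a \<Rightarrow> ereal) \<Rightarrow> bool" where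
  "proper_fun f \<longleftrightarrow> (\<forall>x. f x \<noteq> -\<infinity>) \<and> (\<exists>x. f x \<noteq> \<infinity>)"

definition convex_efun :: "('a::real_vector \<Rightarrow> ereal) \<Rightarrow> bool" where
  "convex_efun f \<longleftrightarrow> (\<forall>x y t. 0 < t \<and> t < 1 \<longrightarrow>
      f ((1 - t) *\<^sub>R x + t *\<^sub>R y) \<le> ereal (1 - t) * f x + ereal t * f y)"

definition lsc_efun :: "('a::topological_space \<Rightarrow> ereal) \<Rightarrow> bool" where
  "lsc_efun f \<longleftrightarrow> (\<forall>c::real. closed {x. f x \<le> ereal c})"

definition Gamma0 :: "('a::{real_vector,topological_space} \<Rightarrow> ereal) set" where
  "Gamma0 = {f. proper_fun f \<and> convex_efun f \<and> lsc_efun f}"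

definition eps_subdiff :: "real \<Rightarrow> ('a::{real_vector,topological_space} \<Rightarrow> ereal) \<Rightarrow> 'a \<Rightarrow> ('a \<Rightarrow> real) set" where
  "eps_subdiff e g x =
     (if g x \<noteq> \<infinity> \<and> g x \<noteq> -\<infinity> \<and> 0 \<le> e
      then {l \<in> dual_space. \<forall>y. g y \<ge> g x + ereal (l (y - x)) - ereal e}
      else {})"

abbreviation subdiff :: "('a::{real_vector,topological_space} \<Rightarrow> ereal) \<Rightarrow> 'a \<Rightarrow> ('a \<Rightarrow> real) set" where
  "subdiff g x \<equiv> eps_subdiff 0 g x"

end

theory Submission
  imports Defs
begin

text \<open>Since x minimizes f, every subgradient at x is an \<open>\<epsilon>\<close>-subgradient, which gives
  one inclusion. Conversely, for \<open>h = f\<close> or \<open>h = f\<^sup>+\<close> one has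
  \<open>h(y) - h(x) \<le> f(y) - f(x)\<close>, and every g in \<open>\<partial>\<^sub>\<epsilon>f(x) \<union> \<epsilon>\<partial>\<^sub>\<epsilon>\<^sub>+\<^sub>Mh(x)\<close> satisfies
  \<open>g(y - x) \<le> f(y) - f(x) + \<epsilon>(2 + M)\<close> for \<open>\<epsilon> \<le> 1\<close>: the factor \<open>\<epsilon>\<close> tames the large
  tolerance \<open>\<epsilon> + M\<close> because \<open>f(y) - f(x) \<ge> 0\<close>. This inequality is weak* closed and convex
  in g, so it passes to the closed convex hull, and letting \<open>\<epsilon> \<rightarrow> 0\<close> gives the subgradient
  inequality.\<close>

lemma closed_Collect_eval_le: "closed {l::'a \<Rightarrow> real. l z \<le> c}"
  by (rule closed_Collect_le) (auto intro: continuous_on_product_coordinates)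

lemma fconv_hull_eval_le:
  assumes "\<And>g. g \<in> A \<Longrightarrow> g z \<le> c" and "l \<in> fconv_hull A"
  shows "l z \<le> c"
proof -
  have "\<exists>(I::nat set) w g. l = (\<lambda>y. \<Sum>i\<in>I. w i * g i y) \<and>
      (\<forall>i\<in>I. 0 \<le> w i \<and> g i \<in> A) \<and> sum w I = 1"
    using assms(2) unfolding fconv_hull_def by auto
  then obtain I :: "nat set" and w g where l: "l = (\<lambda>y. \<Sum>i\<in>I. w i * g i y)"
    and w: "\<forall>i\<in>I. 0 \<le> w i \<and> g i \<in> A" and "sum w I = 1"
    by blast
  have "l z = (\<Sum>i\<in>I. w i * g i z)" using l by simp
  also have "\<dots> \<le> (\<Sum>i\<in>I. w i * c)"
    using w by (intro sum_mono mult_left_mono assms(1)) auto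
  also have "\<dots> = c" using \<open>sum w I = 1\<close> by (simp add: sum_distrib_right[symmetric])
  finally show ?thesis .
qed

lemma wstar_closed_conv_hull_eval_le:
  assumes "\<And>g. g \<in> A \<Longrightarrow> g z \<le> c" and "l \<in> wstar_closed_conv_hull A"
  shows "l z \<le> c"
proof -
  have "closure (fconv_hull A) \<subseteq> {l. l z \<le> c}"
    by (rule closure_minimal) (use fconv_hull_eval_le[OF assms(1)] closed_Collect_eval_le in auto)
  then show ?thesis using assms(2) unfolding wstar_closed_conv_hull_def by blast
qed

lemma wstar_closed_conv_hull_superset: "dual_space \<inter> A \<subseteq> wstar_closed_conv_hull A"
proof
  fix l assume l: "l \<in> dual_space \<inter> A"
  have "l \<in> fconv_hull A"
    unfolding fconv_hull_def
    by (rule CollectI, rule exI[of _ "{0::nat}"], rule exI[of _ "\<lambda>_. 1::real"], rule exI[of _ "\<lambda>_. l"])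
      (use l in auto)
  then show "l \<in> wstar_closed_conv_hull A"
    using l closure_subset unfolding wstar_closed_conv_hull_def by blast
qed

lemma le_of_le_plus_small_multiples:
  fixes u v K :: real
  assumes "\<And>e. 0 < e \<Longrightarrow> e \<le> 1 \<Longrightarrow> u \<le> v + e * K"
  shows "u \<le> v"
proof (rule tendsto_le[of "at_right 0"])
  have "((\<lambda>e. v + e * K) \<longlongrightarrow> v + 0 * K) (at_right 0)"
    by (intro tendsto_intros)
  then show "((\<lambda>e. v + e * K) \<longlongrightarrow> v) (at_right 0)" by simp
  have "eventually (\<lambda>e. 0 < e \<and> e \<le> (1::real)) (at_right 0)"
    by (simp add: eventually_at_right_field) (meson zero_less_one less_imp_le)
  then show "eventually (\<lambda>e. u \<le> v + e * K) (at_right (0::real))"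
    by eventually_elim (use assms in auto)
qed auto

lemma eps_subdiff_mono:
  assumes "e \<le> e'"
  shows "eps_subdiff e g x \<subseteq> eps_subdiff e' g x"
proof
  fix l assume l: "l \<in> eps_subdiff e g x"
  then obtain a where gx: "g x = ereal a" and "0 \<le> e" and "l \<in> dual_space"
    and le: "\<And>y. g y \<ge> ereal (a + l (y - x) - e)"
    unfolding eps_subdiff_def by (cases "g x") (auto split: if_splits)
  have "g y \<ge> ereal (a + l (y - x) - e')" for y
    using le[of y] assms by (meson ereal_less_eq(3) diff_left_mono order_trans)
  moreover have "0 \<le> e'" using \<open>0 \<le> e\<close> assms by linarith
  ultimately show "l \<in> eps_subdiff e' g x"
    using \<open>l \<in> dual_space\<close> unfolding eps_subdiff_def gx by simp
qed

lemma eps_subdiff_eval_le: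
  assumes "l \<in> eps_subdiff e h x" and "h x = ereal a" and "h y \<le> ereal b"
  shows "l (y - x) \<le> b - a + e"
proof -
  have "ereal (a + l (y - x) - e) \<le> h y"
    using assms(1,2) unfolding eps_subdiff_def by (auto split: if_splits)
  then have "ereal (a + l (y - x) - e) \<le> ereal b" using assms(3) by (rule order_trans)
  then show ?thesis by simp
qed

lemma subdiff_eq_Inter_wstar_closed_conv_hull:
  fixes f :: "'a::{real_vector,t2_space} \<Rightarrow> ereal" and C :: "real \<Rightarrow> ('a \<Rightarrow> real) set"
  assumes fx: "f x = ereal a" and not_MInf: "\<And>y. f y \<noteq> -\<infinity>"
    and subdiff_subset: "\<And>e. 0 < e \<Longrightarrow> subdiff f x \<subseteq> C e"
    and C_eval_le: "\<And>e g y b. 0 < e \<Longrightarrow> e \<le> 1 \<Longrightarrow> g \<in> C e \<Longrightarrow> f y = ereal b \<Longrightarrow>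
        g (y - x) \<le> b - a + e * K"
  shows "subdiff f x = (\<Inter>e\<in>{0<..}. wstar_closed_conv_hull (C e))"
proof (intro equalityI subsetI)
  fix l assume l: "l \<in> subdiff f x"
  then have "l \<in> dual_space" unfolding eps_subdiff_def by (auto split: if_splits)
  have "l \<in> wstar_closed_conv_hull (C e)" if "0 < e" for e
    using wstar_closed_conv_hull_superset subdiff_subset[OF that] l \<open>l \<in> dual_space\<close> by blast
  then show "l \<in> (\<Inter>e\<in>{0<..}. wstar_closed_conv_hull (C e))" by simp
next
  fix l assume l: "l \<in> (\<Inter>e\<in>{0<..}. wstar_closed_conv_hull (C e))"
  then have "l \<in> wstar_closed_conv_hull (C 1)" by simp
  then have "l \<in> dual_space" unfolding wstar_closed_conv_hull_def by blast
  have "f y \<ge> ereal (a + l (y - x))" for y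
  proof (cases "f y")
    case (real b)
    have "l (y - x) \<le> b - a"
    proof (rule le_of_le_plus_small_multiples)
      fix e :: real assume "0 < e" "e \<le> 1"
      have "l \<in> wstar_closed_conv_hull (C e)" using l \<open>0 < e\<close> by simp
      then show "l (y - x) \<le> b - a + e * K"
        using C_eval_le[OF \<open>0 < e\<close> \<open>e \<le> 1\<close> _ real] by (rule wstar_closed_conv_hull_eval_le[rotated])
    qed
    then show ?thesis using real by simp
  next
    case PInf
    then show ?thesis by simp
  next
    case MInf
    with not_MInf show ?thesis by blast
  qed
  then show "l \<in> subdiff f x"
    using \<open>l \<in> dual_space\<close> unfolding eps_subdiff_def fx by simp
qed

lemma subdiff_eq_Inter_wstar_closed_conv_hull_at_minimizer:
  fixes f h :: "'a::{real_vector,t2_space} \<Rightarrow> ereal"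
  assumes fx: "f x = ereal a" and min: "\<And>y. f x \<le> f y" and "0 \<le> M"
    and hx: "h x = ereal a'" and h_le: "\<And>y b. f y = ereal b \<Longrightarrow> h y \<le> ereal (b - a + a')"
  shows "subdiff f x =
    (\<Inter>e\<in>{0<..}. wstar_closed_conv_hull (eps_subdiff e f x \<union> fscale e (eps_subdiff (e + M) h x)))"
proof (rule subdiff_eq_Inter_wstar_closed_conv_hull[where f = f and x = x and K = "2 + M", OF fx])
  show "f y \<noteq> -\<infinity>" for y
    using min[of y] fx by auto
  show "subdiff f x \<subseteq> eps_subdiff e f x \<union> fscale e (eps_subdiff (e + M) h x)" if "0 < e" for e
    using eps_subdiff_mono[of 0 e f x] that by auto
next
  fix e g y b
  assume e: "0 < e" "e \<le> 1" and fy: "f y = ereal b"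
    and g: "g \<in> eps_subdiff e f x \<union> fscale e (eps_subdiff (e + M) h x)"
  have "a \<le> b" using min[of y] fx fy by simp
  from g show "g (y - x) \<le> b - a + e * (2 + M)"
  proof
    assume "g \<in> eps_subdiff e f x"
    from this fx have "g (y - x) \<le> b - a + e" by (rule eps_subdiff_eval_le) (simp add: fy)
    also have "\<dots> \<le> b - a + e * (2 + M)"
      using e \<open>0 \<le> M\<close> by (simp add: mult_le_cancel_left1)
    finally show ?thesis .
  next
    assume "g \<in> fscale e (eps_subdiff (e + M) h x)"
    then obtain m where gm: "g = (\<lambda>z. e * m z)" and m: "m \<in> eps_subdiff (e + M) h x"
      unfolding fscale_def by auto
    have "m (y - x) \<le> (b - a) + (e + M)"
      using eps_subdiff_eval_le[OF m hx h_le[OF fy]] by simp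
    then have "e * m (y - x) \<le> e * ((b - a) + (e + M))"
      using e by (intro mult_left_mono) auto
    then have "g (y - x) \<le> e * (b - a) + e * e + e * M"
      unfolding gm by (simp add: distrib_left)
    moreover have "e * (b - a) \<le> b - a"
      by (rule mult_left_le_one_le) (use e \<open>a \<le> b\<close> in auto)
    moreover have "e * e \<le> e"
      by (rule mult_left_le_one_le) (use e in auto)
    ultimately have "g (y - x) \<le> b - a + e * (1 + M)" by (simp add: distrib_left)
    also have "\<dots> \<le> b - a + e * (2 + M)"
      using e by (intro add_left_mono mult_left_mono) auto
    finally show ?thesis .
  qed
qed

theorem lemma1:
  fixes f :: "'a::{real_vector,t2_space} \<Rightarrow> ereal" and x :: 'a and M :: real
  assumes "locally_convex_space TYPE('a)"
    and "f \<in> Gamma0"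
    and "\<forall>y. f x \<le> f y"
    and "M \<ge> 0"
  shows "subdiff f x =
           (\<Inter>e\<in>{0<..}. wstar_closed_conv_hull (eps_subdiff e f x \<union> fscale e (eps_subdiff (e + M) f x)))
       \<and> (\<Inter>e\<in>{0<..}. wstar_closed_conv_hull (eps_subdiff e f x \<union> fscale e (eps_subdiff (e + M) f x)))
         = (\<Inter>e\<in>{0<..}. wstar_closed_conv_hull (eps_subdiff e f x \<union>
                fscale e (eps_subdiff (e + M) (\<lambda>y. max (f y) 0) x)))"
proof -
  have min: "\<And>y. f x \<le> f y" using assms(3) by blast
  obtain z where "f z \<noteq> \<infinity>" and "f x \<noteq> -\<infinity>"
    using assms(2) unfolding Gamma0_def proper_fun_def by auto
  with min[of z] obtain a where fx: "f x = ereal a" by (cases "f x") auto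
  have hx: "max (f x) 0 = ereal (max a 0)" using fx by (simp add: max_def)
  have h_le: "max (f y) 0 \<le> ereal (b - a + max a 0)" if "f y = ereal b" for y b
    using min[of y] fx that by (simp add: max_def)
  have "subdiff f x = (\<Inter>e\<in>{0<..}. wstar_closed_conv_hull (eps_subdiff e f x \<union>
      fscale e (eps_subdiff (e + M) (\<lambda>y. max (f y) 0) x)))"
    by (rule subdiff_eq_Inter_wstar_closed_conv_hull_at_minimizer[where f = f and x = x and h = "\<lambda>y. max (f y) 0",
          OF fx min \<open>M \<ge> 0\<close> hx h_le])
  moreover have "subdiff f x = (\<Inter>e\<in>{0<..}. wstar_closed_conv_hull (eps_subdiff e f x \<union>
      fscale e (eps_subdiff (e + M) f x)))"
    by (rule subdiff_eq_Inter_wstar_closed_conv_hull_at_minimizer[where f = f and x = x and h = f,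
          OF fx min \<open>M \<ge> 0\<close> fx]) simp
  ultimately show ?thesis by simp
qed

end
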